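(* Let $n>2$, $V=\mathbb{F}_2^n$, and let $g\in\mathrm{Sym}(V)$ be such that $T\neq T^g$. If $W\le V$ is the subspace with $\sigma_W=T\cap T^g$, then $\dim(W)\le n-2$.
   Context: $T=\{\sigma_v: v\in V\}\le\mathrm{Sym}(V)$ is the group of translations $\sigma_v:x\mapsto x+v$; for a subset $W\subseteq V$, $\sigma_W=\{\sigma_w:w\in W\}$. $T^g=g^{-1}Tg$. Permutations act on the right. *)

theory Defs
  imports "HOL-Analysis.Analysis" "HOL-Library.Z2"
begin

definition transl :: "'a::plus \<Rightarrow> 'a \<Rightarrow> 'a" where
  "transl v = (\<lambda>x. x + v)"

definition transl_group :: "('a::plus \<Rightarrow> 'a) set" where
  "transl_group = range transl"

text \<open>Conjugate H^g = g^-1 H g with permutations acting on the right,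
  i.e. x^(g^-1 h g) = g (h (g^-1 x)).\<close>
definition conj_set :: "('a \<Rightarrow> 'a) \<Rightarrow> ('a \<Rightarrow> 'a) set \<Rightarrow> ('a \<Rightarrow> 'a) set" where
  "conj_set g H = (\<lambda>h. g \<circ> h \<circ> inv g) ` H"

end

theory Submission
  imports Defs
begin

text \<open>Suppose \<open>dim W \<ge> n - 1\<close>, so every vector lies in \<open>W\<close> or in the other coset \<open>v + W\<close>
  of any \<open>v \<notin> W\<close>. The group \<open>T\<^sup>g\<close> is abelian, regular and of exponent 2, and contains
  \<open>\<sigma>\<^sub>W\<close>. For \<open>v \<notin> W\<close> let \<open>h \<in> T\<^sup>g\<close> map \<open>0\<close> to \<open>v\<close>. Commuting \<open>h\<close> past \<open>\<sigma>\<^sub>x\<close> gives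
  \<open>h x = x + v\<close> for \<open>x \<in> W\<close>, and past \<open>\<sigma>\<^bsub>x+v\<^esub>\<close> together with \<open>h v = h (h 0) = 0\<close> gives
  the same for \<open>x \<notin> W\<close>; hence \<open>h = \<sigma>\<^sub>v\<close> and \<open>T \<subseteq> T\<^sup>g\<close>. Since \<open>T\<^sup>g\<close> is abelian, it
  centralises \<open>T\<close>, whose centraliser is \<open>T\<close> itself; so \<open>T\<^sup>g = T\<close>.\<close>

lemma bitvec_add_self [simp]: "(x :: bit ^ 'n) + x = 0"
  by (simp add: vec_eq_iff)

lemma bitvec_diff_eq_add: "(x :: bit ^ 'n) - y = x + y"
  by (simp add: vec_eq_iff)

lemma transl_apply: "transl v x = x + v"
  by (simp add: transl_def)

lemma vec_span_eq_UNIV_if_card_le_dim: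
  fixes S :: "('a :: field ^ 'n) set"
  assumes "CARD('n) \<le> vec.dim S"
  shows "vec.span S = UNIV"
  using assms dim_subset_UNIV_cart_gen[of S]
  by (simp add: vec.dim_eq_full[symmetric] vec.dimension_def card_cart_basis)

lemma mem_coset_if_codim_le_1:
  fixes W :: "(bit ^ 'n) set"
  assumes "vec.subspace W" and "CARD('n) \<le> vec.dim W + 1" and "y \<notin> W"
  shows "v \<in> W \<or> v + y \<in> W"
proof -
  have span_W: "vec.span W = W"
    using assms(1) by simp
  have "vec.dim (insert y W) = vec.dim W + 1"
    using assms(3) span_W vec.dim_insert[of y W] by metis
  then have "vec.span (insert y W) = UNIV"
    using assms(2) by (simp add: vec_span_eq_UNIV_if_card_le_dim)
  then obtain k where "v - k *s y \<in> W"
    using span_W by (auto simp: vec.span_insert)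
  moreover have "k = 0 \<or> k = 1"
    by (cases k) auto
  ultimately show ?thesis
    by (auto simp: bitvec_diff_eq_add)
qed

lemma eq_transl_if_commutes_transl:
  fixes h :: "'a :: comm_monoid_add \<Rightarrow> 'a"
  assumes "\<And>v x. h (transl v x) = transl v (h x)"
  shows "h = transl (h 0)"
proof
  fix x
  have "h x = h (transl x 0)"
    by (simp add: transl_apply)
  also have "\<dots> = transl x (h 0)"
    by (rule assms)
  also have "\<dots> = transl (h 0) x"
    by (simp add: transl_apply add.commute)
  finally show "h x = transl (h 0) x" .
qed

lemma mem_conj_transl_group_iff:
  "h \<in> conj_set g transl_group \<longleftrightarrow> (\<exists>v. h = g \<circ> transl v \<circ> inv g)"
  unfolding conj_set_def transl_group_def by auto

lemma conj_transl_group_commute: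
  fixes g :: "'a :: ab_semigroup_add \<Rightarrow> 'a"
  assumes "bij g" and "h1 \<in> conj_set g transl_group" and "h2 \<in> conj_set g transl_group"
  shows "h1 (h2 x) = h2 (h1 x)"
proof -
  obtain u v where "h1 = g \<circ> transl u \<circ> inv g" and "h2 = g \<circ> transl v \<circ> inv g"
    using assms(2,3) by (auto simp: mem_conj_transl_group_iff)
  then show ?thesis
    using assms(1) by (simp add: bij_is_inj transl_def ac_simps)
qed

lemma conj_transl_group_transitive:
  fixes g :: "'a :: ab_group_add \<Rightarrow> 'a"
  assumes "bij g"
  shows "\<exists>h \<in> conj_set g transl_group. h x = y"
proof
  let ?h = "g \<circ> transl (inv g y - inv g x) \<circ> inv g"
  show "?h \<in> conj_set g transl_group"
    by (auto simp: mem_conj_transl_group_iff)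
  show "?h x = y"
    using assms by (simp add: bij_is_surj surj_f_inv_f transl_def)
qed

lemma conj_transl_group_involution:
  fixes g :: "bit ^ 'n \<Rightarrow> bit ^ 'n"
  assumes "bij g" and "h \<in> conj_set g transl_group"
  shows "h (h x) = x"
proof -
  obtain v where "h = g \<circ> transl v \<circ> inv g"
    using assms(2) by (auto simp: mem_conj_transl_group_iff)
  then show ?thesis
    using assms(1) by (simp add: bij_is_inj bij_is_surj surj_f_inv_f transl_def add.assoc)
qed

lemma transl_mem_if_codim_le_1:
  fixes H :: "(bit ^ 'n \<Rightarrow> bit ^ 'n) set" and W :: "(bit ^ 'n) set"
  assumes comm: "\<And>h1 h2 x. h1 \<in> H \<Longrightarrow> h2 \<in> H \<Longrightarrow> h1 (h2 x) = h2 (h1 x)"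
    and transitive: "\<And>x y. \<exists>h \<in> H. h x = y"
    and involution: "\<And>h x. h \<in> H \<Longrightarrow> h (h x) = x"
    and "vec.subspace W" and "CARD('n) \<le> vec.dim W + 1" and W_in_H: "transl ` W \<subseteq> H"
  shows "transl v \<in> H"
proof (cases "v \<in> W")
  case True
  then show ?thesis using W_in_H by blast
next
  case v_notin: False
  obtain h where h: "h \<in> H" "h 0 = v"
    using transitive by blast
  have h_transl: "h (transl w x) = transl w (h x)" if "w \<in> W" for w x
    using comm[OF h(1), of "transl w"] W_in_H that by blast
  have "h = transl v"
  proof
    fix x
    show "h x = transl v x"
    proof (cases "x \<in> W")
      case True
      then show ?thesis
        using h_transl[of x 0] h(2) by (simp add: transl_apply add.commute)
    next
      case False
      then have "x + v \<in> W"
        using mem_coset_if_codim_le_1[OF assms(4,5) v_notin] by blast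
      have "h x = h (transl (x + v) v)"
        by (simp add: transl_apply add.left_commute[of v x v])
      also have "\<dots> = transl (x + v) (h v)"
        using \<open>x + v \<in> W\<close> by (rule h_transl)
      also have "h v = 0"
        using involution[OF h(1), of 0] h(2) by simp
      finally show ?thesis
        by (simp add: transl_apply add.commute)
    qed
  qed
  then show ?thesis using h(1) by simp
qed

lemma eq_transl_group_if_commutes:
  fixes H :: "('a :: comm_monoid_add \<Rightarrow> 'a) set"
  assumes comm: "\<And>h1 h2 x. h1 \<in> H \<Longrightarrow> h2 \<in> H \<Longrightarrow> h1 (h2 x) = h2 (h1 x)"
    and transl_in_H: "\<And>v. transl v \<in> H"
  shows "H = transl_group"
proof
  show "H \<subseteq> transl_group"
  proof
    fix h assume "h \<in> H"
    then have "h = transl (h 0)"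
      using comm transl_in_H by (blast intro: eq_transl_if_commutes_transl)
    then show "h \<in> transl_group"
      unfolding transl_group_def by (metis rangeI)
  qed
  show "transl_group \<subseteq> H"
    using transl_in_H by (auto simp: transl_group_def)
qed

theorem mainTheorem4:
  fixes g :: "bit ^ 'n \<Rightarrow> bit ^ 'n" and W :: "(bit ^ 'n) set"
  assumes "CARD('n) > 2"
    and "bij g"
    and "(transl_group :: (bit ^ 'n \<Rightarrow> bit ^ 'n) set) \<noteq> conj_set g transl_group"
    and "vec.subspace W"
    and "transl ` W = transl_group \<inter> conj_set g transl_group"
  shows "vec.dim W \<le> CARD('n) - 2"
proof (rule ccontr)
  assume "\<not> vec.dim W \<le> CARD('n) - 2"
  then have codim: "CARD('n) \<le> vec.dim W + 1"
    using assms(1) by linarith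
  let ?H = "conj_set g (transl_group :: (bit ^ 'n \<Rightarrow> bit ^ 'n) set)"
  note comm = conj_transl_group_commute[OF assms(2)]
  have transl_in_H: "transl v \<in> ?H" for v
  proof (rule transl_mem_if_codim_le_1[where H = ?H])
    show "transl ` W \<subseteq> ?H"
      using assms(5) by blast
  qed (use assms(2,4) codim comm in
      \<open>auto intro: conj_transl_group_transitive conj_transl_group_involution\<close>)
  have "?H = transl_group"
    by (rule eq_transl_group_if_commutes) (use comm transl_in_H in blast)+
  with assms(3) show False by simp
qed

end
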